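(* Let $\mathcal M=(\mathbf M^{(\lambda)})_{\lambda>0}$ be a weight matrix on $\mathbb N_0^d$. (Roumieu) Suppose that for every $\lambda>0$ there exist $\kappa\ge\lambda$, $A\ge1$ with $M^{(\lambda)}_{\alpha+e_j}\le A^{|\alpha|+1}M^{(\kappa)}_\alpha$ for all $\alpha\in\mathbb N_0^d$, $1\le j\le d$, and that for every $\lambda>0$ there exist $\kappa\ge\lambda$, $A\ge1$ with $M^{(\lambda)}_\alpha M^{(\lambda)}_\beta\le A^{|\alpha+\beta|}M^{(\kappa)}_{\alpha+\beta}$ for all $\alpha,\beta\in\mathbb N_0^d$. Then the following are equivalent: (a) there exist $\lambda>0$ and $C,C_1>0$ with $\alpha^{\alpha/2}\le C_1C^{|\alpha|}M^{(\lambda)}_\alpha$ for all $\alpha\in\mathbb N_0^d$; (b) for every $\lambda>0$ there exist $\kappa\ge\lambda$, $B,C,H>0$ with $\alpha^{\alpha/2}M^{(\lambda)}_\beta\le BC^{|\alpha|}H^{|\alpha+\beta|}M^{(\kappa)}_{\alpha+\beta}$ for all $\alpha,\beta\in\mathbb N_0^d$; (c) $H_\gamma\in\mathcal S_{\{\mathcal M\}}$ for all $\gamma\in\mathbb N_0^d$. (Beurling) Suppose that for every $\lambda>0$ there exist $0<\kappa\le\lambda$, $A\ge1$ with $M^{(\kappa)}_{\alpha+e_j}\le A^{|\alpha|+1}M^{(\lambda)}_\alpha$ for all $\alpha$, $1\le j\le d$, and that for every $\lambda>0$ there exist $0<\kappa\le\lambda$, $A\ge1$ with $M^{(\kappa)}_\alpha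 M^{(\kappa)}_\beta\le A^{|\alpha+\beta|}M^{(\lambda)}_{\alpha+\beta}$ for all $\alpha,\beta$. Then the following are equivalent: (a') for all $\lambda,C>0$ there exists $C_1>0$ with $\alpha^{\alpha/2}\le C_1C^{|\alpha|}M^{(\lambda)}_\alpha$ for all $\alpha\in\mathbb N_0^d$; (b') for every $\lambda>0$ there exist $0<\kappa\le\lambda$, $H>0$ such that for every $C>0$ there is $B>0$ with $\alpha^{\alpha/2}M^{(\kappa)}_\beta\le BC^{|\alpha|}H^{|\alpha+\beta|}M^{(\lambda)}_{\alpha+\beta}$ for all $\alpha,\beta\in\mathbb N_0^d$; (c') $H_\gamma\in\mathcal S_{(\mathcal M)}$ for all $\gamma\in\mathbb N_0^d$.
   Context: A weight matrix is a family $\mathcal M=(\mathbf M^{(\lambda)})_{\lambda>0}$ with $\mathbf M^{(\lambda)}=(M^{(\lambda)}_\alpha)_{\alpha\in\mathbb N_0^d}$ sequences of positive reals, $M^{(\lambda)}_0=1$, and $M^{(\lambda)}_\alpha\le M^{(\kappa)}_\alpha$ for all $\alpha$ whenever $0<\lambda\le\kappa$. Notation: $|\alpha|=\sum\alpha_j$, $e_j$ the $j$-th unit vector, $\alpha^{\alpha/2}=\prod_j\alpha_j^{\alpha_j/2}$ with $0^0=1$. $\|f\|_{\infty,\mathbf M,h}:=\sup_{\alpha,\beta}\frac{\|x^\alpha\partial^\beta f\|_\infty}{h^{|\alpha+\beta|}M_{\alpha+\beta}}$; $\mathcal S_{\{\mathcal M\}}$ ($\mathcal S_{(\mathcal M)}$)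 is the set of $f\in C^\infty(\mathbb R^d)$ with $\|f\|_{\infty,\mathbf M^{(\lambda)},h}<\infty$ for some (for all) $\lambda,h>0$. Hermite functions: $H_\gamma(x)=(2^{|\gamma|}\gamma!\pi^{d/2})^{-1/2}h_\gamma(x)e^{-|x|^2/2}$, $h_\gamma(x)=(-1)^{|\gamma|}e^{|x|^2}\partial^\gamma e^{-|x|^2}$. *)

theory Defs
  imports "HOL-Analysis.Analysis"
begin

text \<open>Multi-indices in N_0^d are functions 'd \<Rightarrow> nat on a finite index type 'd
  (d = CARD('d)); points of R^d are vectors real^'d.\<close>

type_synonym 'd mindex = "'d \<Rightarrow> nat"

definition mabs :: "('d::finite) mindex \<Rightarrow> nat" where
  "mabs \<alpha> = (\<Sum>j\<in>UNIV. \<alpha> j)"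

definition madd :: "('d::finite) mindex \<Rightarrow> 'd mindex \<Rightarrow> 'd mindex" where
  "madd \<alpha> \<beta> = (\<lambda>i. \<alpha> i + \<beta> i)"

definition unitidx :: "('d::finite) \<Rightarrow> 'd mindex" where
  "unitidx j = (\<lambda>i. if i = j then 1 else 0)"

definition mfact :: "('d::finite) mindex \<Rightarrow> nat" where
  "mfact \<alpha> = (\<Prod>j\<in>UNIV. fact (\<alpha> j))"

text \<open>alpha^(alpha/2) = prod_j alpha_j^(alpha_j/2), with 0^0 = 1.\<close>
definition halfpow :: "('d::finite) mindex \<Rightarrow> real" where
  "halfpow \<alpha> = (\<Prod>j\<in>UNIV. sqrt (real (\<alpha> j) ^ (\<alpha> j)))"

definition monomial :: "('d::finite) mindex \<Rightarrow> real^'d \<Rightarrow> real" where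
  "monomial \<alpha> x = (\<Prod>j\<in>UNIV. (x $ j) ^ (\<alpha> j))"

definition weight_matrix :: "(real \<Rightarrow> ('d::finite) mindex \<Rightarrow> real) \<Rightarrow> bool" where
  "weight_matrix M \<longleftrightarrow>
     (\<forall>lam>0. (\<forall>\<alpha>. M lam \<alpha> > 0) \<and> M lam (\<lambda>_. 0) = 1) \<and>
     (\<forall>lam kap \<alpha>. 0 < lam \<longrightarrow> lam \<le> kap \<longrightarrow> M lam \<alpha> \<le> M kap \<alpha>)"

definition partial :: "'d::finite \<Rightarrow> (real^'d \<Rightarrow> real) \<Rightarrow> real^'d \<Rightarrow> real" where
  "partial j f x = deriv (\<lambda>t. f (x + t *\<^sub>R axis j 1)) 0"

fun iter_partial :: "('d::finite) list \<Rightarrow> (real^'d \<Rightarrow> real) \<Rightarrow> real^'d \<Rightarrow> real" where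
  "iter_partial [] f = f"
| "iter_partial (j # js) f = partial j (iter_partial js f)"

definition smooth :: "(real^('d::finite) \<Rightarrow> real) \<Rightarrow> bool" where
  "smooth f \<longleftrightarrow> (\<forall>js x. iter_partial js f differentiable (at x))"

definition dlist :: "('d::finite) list" where
  "dlist = (SOME xs. distinct xs \<and> set xs = UNIV)"

text \<open>partial^beta f (order irrelevant for smooth f).\<close>
definition mderiv :: "('d::finite) mindex \<Rightarrow> (real^'d \<Rightarrow> real) \<Rightarrow> real^'d \<Rightarrow> real" where
  "mderiv \<beta> f = iter_partial (concat (map (\<lambda>j. replicate (\<beta> j) j) dlist)) f"

definition GS_bounded :: "(real^('d::finite) \<Rightarrow> real) \<Rightarrow> ('d mindex \<Rightarrow> real) \<Rightarrow> real \<Rightarrow> bool" where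
  "GS_bounded f Mseq h \<longleftrightarrow> (\<exists>K. \<forall>\<alpha> \<beta> x.
     \<bar>monomial \<alpha> x * mderiv \<beta> f x\<bar> \<le> K * h ^ mabs (madd \<alpha> \<beta>) * Mseq (madd \<alpha> \<beta>))"

definition S_Roumieu :: "(real \<Rightarrow> ('d::finite) mindex \<Rightarrow> real) \<Rightarrow> (real^'d \<Rightarrow> real) set" where
  "S_Roumieu M = {f. smooth f \<and> (\<exists>lam>0. \<exists>h>0. GS_bounded f (M lam) h)}"

definition S_Beurling :: "(real \<Rightarrow> ('d::finite) mindex \<Rightarrow> real) \<Rightarrow> (real^'d \<Rightarrow> real) set" where
  "S_Beurling M = {f. smooth f \<and> (\<forall>lam>0. \<forall>h>0. GS_bounded f (M lam) h)}"

definition hermite_poly :: "('d::finite) mindex \<Rightarrow> real^'d \<Rightarrow> real" where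
  "hermite_poly \<gamma> x = (-1) ^ mabs \<gamma> * exp (norm x ^ 2) * mderiv \<gamma> (\<lambda>y. exp (- (norm y ^ 2))) x"

definition hermite_fun :: "('d::finite) mindex \<Rightarrow> real^'d \<Rightarrow> real" where
  "hermite_fun \<gamma> x = inverse (sqrt (2 ^ mabs \<gamma> * real (mfact \<gamma>) * pi powr (real CARD('d) / 2)))
      * hermite_poly \<gamma> x * exp (- (norm x ^ 2) / 2)"

end

theory Submission
  imports Defs "HOL-Computational_Algebra.Polynomial"
begin

text \<open>Each Hermite function is a tensor product of one-variable functions \<open>p(t) exp(-t^2/2)\<close>
  with \<open>p\<close> a polynomial, and differentiation preserves this shape (\<open>p \<mapsto> p' - t p\<close>).
  Estimating \<open>|t|^m exp(-t^2/2) \<le> m^(m/2)\<close> coefficient by coefficient yields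
  \<open>|x^\<alpha> \<partial>^\<beta> H\<^sub>\<gamma>(x)| \<le> K D^|\<alpha>+\<beta>| (\<alpha>+\<beta>)^((\<alpha>+\<beta>)/2)\<close>, so a bound
  \<open>\<alpha>^(\<alpha>/2) \<le> C\<^sub>1 C^|\<alpha>| M\<^sub>\<alpha>\<close> puts every \<open>H\<^sub>\<gamma>\<close> into the Gelfand--Shilov space.
  Conversely, evaluating \<open>x^\<alpha> H\<^sub>0(x)\<close> at a suitable point recovers such a bound. The mixed
  bounds (b) follow from (a) by the product condition on the weight matrix, and give back (a)
  for \<open>\<beta> = 0\<close>.\<close>

section \<open>Tensor products of functions of one variable\<close>

definition tensor_prod :: "('d::finite \<Rightarrow> real \<Rightarrow> real) \<Rightarrow> real^'d \<Rightarrow> real" where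
  "tensor_prod u x = (\<Prod>j\<in>UNIV. u j (x$j))"

definition real_smooth :: "(real \<Rightarrow> real) \<Rightarrow> bool" where
  "real_smooth v \<longleftrightarrow> (\<forall>n t. (deriv^^n) v differentiable (at t))"

lemma tensor_prod_split:
  "tensor_prod u x = u k (x$k) * (\<Prod>j\<in>UNIV-{k}. u j (x$j))"
  unfolding tensor_prod_def by (simp add: prod.remove[of UNIV k])

lemma partial_tensor_prod:
  assumes "u k differentiable (at (x$k))"
  shows "partial k (tensor_prod u) x = tensor_prod (u(k := deriv (u k))) x"
proof -
  define R where "R = (\<Prod>j\<in>UNIV-{k}. u j (x$j))"
  have R_upd: "R = (\<Prod>j\<in>UNIV-{k}. (u(k := deriv (u k))) j (x$j))"
    unfolding R_def by (rule prod.cong) auto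
  have line: "tensor_prod u (x + t *\<^sub>R axis k 1) = u k (x$k + t) * R" for t
  proof -
    have "(\<Prod>j\<in>UNIV-{k}. u j ((x + t *\<^sub>R axis k 1)$j)) = R"
      unfolding R_def by (rule prod.cong) (auto simp: axis_def)
    then show ?thesis by (simp add: tensor_prod_split[where k = k] axis_def)
  qed
  have "DERIV (u k) (x$k) :> deriv (u k) (x$k)"
    using assms DERIV_deriv_iff_real_differentiable by blast
  then have "DERIV (\<lambda>t. u k (x$k + t) * R) 0 :> deriv (u k) (x$k) * R"
    using DERIV_shift[THEN iffD1, of "u k" "deriv (u k) (x$k)" 0 "x$k"]
    by (auto intro!: derivative_eq_intros simp: add.commute)
  then have "partial k (tensor_prod u) x = deriv (u k) (x$k) * R"
    unfolding partial_def line by (rule DERIV_imp_deriv)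
  also have "\<dots> = tensor_prod (u(k := deriv (u k))) x"
    by (simp add: tensor_prod_split[where k = k] R_upd)
  finally show ?thesis .
qed

lemma iter_partial_tensor_prod:
  assumes "\<And>j. real_smooth (u j)"
  shows "iter_partial js (tensor_prod u) = tensor_prod (\<lambda>j. (deriv^^count_list js j) (u j))"
proof (induction js)
  case Nil
  then show ?case by simp
next
  case (Cons k js)
  define v where "v = (\<lambda>j. (deriv^^count_list js j) (u j))"
  have "v k differentiable (at t)" for t
    using assms unfolding real_smooth_def v_def by blast
  then have "partial k (tensor_prod v) = tensor_prod (v(k := deriv (v k)))"
    using partial_tensor_prod by blast
  moreover have "v(k := deriv (v k)) = (\<lambda>j. (deriv^^count_list (k#js) j) (u j))"
    by (rule ext) (simp add: v_def)
  ultimately show ?case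
    using Cons by (simp add: v_def)
qed

lemma tensor_prod_differentiable:
  fixes v :: "'d::finite \<Rightarrow> real \<Rightarrow> real"
  assumes "\<And>j t. v j differentiable (at t)"
  shows "tensor_prod v differentiable (at x)"
proof -
  have "(\<lambda>x. \<Prod>j\<in>S. v j ((x::real^'d)$j)) differentiable (at x)" if "finite S" for S :: "'d set"
    using that
  proof (induction S rule: finite_induct)
    case empty
    then show ?case by simp
  next
    case (insert a S)
    have "(\<lambda>x. v a ((x::real^'d)$a)) differentiable (at x)"
      by (rule differentiable_compose[of "v a"])
        (use assms bounded_linear_imp_differentiable[OF bounded_linear_vec_nth] in auto)
    with insert show ?case by (simp add: prod.insert)
  qed
  then show ?thesis unfolding tensor_prod_def[abs_def] by simp
qed

lemma smooth_tensor_prod: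
  assumes "\<And>j. real_smooth (u j)"
  shows "smooth (tensor_prod u)"
  unfolding smooth_def iter_partial_tensor_prod[OF assms]
  using assms by (auto simp: real_smooth_def intro: tensor_prod_differentiable)

lemma count_list_replicate: "count_list (replicate n j) k = (if j = k then n else 0)"
  by (induction n) auto

lemma count_list_concat_replicate:
  "distinct l \<Longrightarrow> count_list (concat (map (\<lambda>j. replicate (\<beta> j) j) l)) k = (if k \<in> set l then \<beta> k else 0)"
  by (induction l) (auto simp: count_list_replicate)

lemma distinct_dlist: "distinct (dlist::('d::finite) list)"
  and set_dlist: "set (dlist::('d::finite) list) = UNIV"
proof -
  have "\<exists>xs::'d list. distinct xs \<and> set xs = UNIV"
    using finite_distinct_list[of "UNIV::'d set"] by auto
  then show "distinct (dlist::'d list)" "set (dlist::'d list) = UNIV"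
    unfolding dlist_def by (metis (mono_tags, lifting) someI_ex)+
qed

lemma mderiv_tensor_prod:
  assumes "\<And>j. real_smooth (u j)"
  shows "mderiv \<beta> (tensor_prod u) = tensor_prod (\<lambda>j. (deriv^^\<beta> j) (u j))"
  unfolding mderiv_def iter_partial_tensor_prod[OF assms]
  by (simp add: count_list_concat_replicate distinct_dlist set_dlist)

lemma mderiv_zero: "mderiv (\<lambda>_. 0) f = f"
  unfolding mderiv_def by (subst concat_eq_Nil_conv[THEN iffD2]) auto

lemma monomial_mult_tensor_prod:
  "monomial \<alpha> x * tensor_prod v x = (\<Prod>j\<in>UNIV. (x$j)^(\<alpha> j) * v j (x$j))"
  unfolding monomial_def tensor_prod_def by (simp add: prod.distrib)

section \<open>Polynomials times Gaussians\<close>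

definition gauss_poly :: "real \<Rightarrow> real poly \<Rightarrow> real \<Rightarrow> real" where
  "gauss_poly c p t = poly p t * exp (- (c * t^2))"

definition gauss_deriv_poly :: "real \<Rightarrow> real poly \<Rightarrow> real poly" where
  "gauss_deriv_poly c p = pderiv p - smult (2*c) (pCons 0 p)"

lemma gauss_poly_has_derivative:
  "(gauss_poly c p has_real_derivative gauss_poly c (gauss_deriv_poly c p) t) (at t)"
proof -
  have "(gauss_poly c p has_real_derivative
      poly (pderiv p) t * exp (- (c * t^2)) + poly p t * (exp (- (c * t^2)) * (- (c * (2 * t))))) (at t)"
    unfolding gauss_poly_def[abs_def] by (auto intro!: derivative_eq_intros poly_DERIV)
  then show ?thesis
    by (simp add: gauss_poly_def gauss_deriv_poly_def algebra_simps)
qed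

lemma deriv_gauss_poly: "deriv (gauss_poly c p) = gauss_poly c (gauss_deriv_poly c p)"
  using gauss_poly_has_derivative DERIV_imp_deriv by blast

lemma funpow_deriv_gauss_poly: "(deriv^^n) (gauss_poly c p) = gauss_poly c ((gauss_deriv_poly c ^^ n) p)"
  by (induction n) (simp_all add: deriv_gauss_poly)

lemma real_smooth_gauss_poly: "real_smooth (gauss_poly c p)"
  unfolding real_smooth_def funpow_deriv_gauss_poly
  using gauss_poly_has_derivative real_differentiable_def by blast

section \<open>Hermite functions as tensor products\<close>

lemma power2_norm_vec: "norm (y::real^'d::finite) ^ 2 = (\<Sum>j\<in>UNIV. (y$j)^2)"
  unfolding power2_norm_eq_inner inner_vec_def by (simp add: power2_eq_square)

lemma exp_minus_norm_eq_tensor_prod: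
  "exp (- (c * norm (x::real^'d::finite) ^ 2)) = tensor_prod (\<lambda>j. gauss_poly c 1) x"
  by (simp add: tensor_prod_def gauss_poly_def power2_norm_vec exp_sum[symmetric] sum_negf sum_distrib_left)

definition hermite_const :: "('d::finite) mindex \<Rightarrow> real" where
  "hermite_const \<gamma> =
     (-1) ^ mabs \<gamma> / sqrt (2 ^ mabs \<gamma> * real (mfact \<gamma>) * pi powr (real CARD('d) / 2))"

text \<open>The normalising constant is absorbed into the factor of one arbitrary coordinate.\<close>
definition hermite_factor :: "('d::finite) mindex \<Rightarrow> 'd \<Rightarrow> real poly" where
  "hermite_factor \<gamma> j =
     smult (if j = undefined then hermite_const \<gamma> else 1) ((gauss_deriv_poly 1 ^^ \<gamma> j) 1)"

lemma tensor_prod_gauss_poly: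
  "tensor_prod (\<lambda>j. gauss_poly c (p j)) x = (\<Prod>j\<in>UNIV. poly (p j) (x$j)) * exp (- (c * norm x ^ 2))"
  by (simp add: exp_minus_norm_eq_tensor_prod tensor_prod_def gauss_poly_def prod.distrib)

lemma prod_hermite_factor:
  "(\<Prod>j\<in>UNIV. poly (hermite_factor \<gamma> j) (t j))
     = hermite_const \<gamma> * (\<Prod>j\<in>UNIV. poly ((gauss_deriv_poly 1 ^^ \<gamma> j) 1) (t j))"
  by (simp add: hermite_factor_def prod.distrib)

lemma hermite_fun_eq_tensor_prod:
  fixes \<gamma> :: "('d::finite) mindex"
  shows "hermite_fun \<gamma> = tensor_prod (\<lambda>j. gauss_poly (1/2) (hermite_factor \<gamma> j))"
proof
  fix x :: "real^'d"
  define P where "P = (\<Prod>j\<in>UNIV. poly ((gauss_deriv_poly 1 ^^ \<gamma> j) 1) (x$j))"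
  have "(\<lambda>y::real^'d. exp (- (norm y ^ 2))) = tensor_prod (\<lambda>j. gauss_poly 1 1)"
    using exp_minus_norm_eq_tensor_prod[of 1] by auto
  then have md: "mderiv \<gamma> (\<lambda>y::real^'d. exp (- (norm y ^ 2))) x = P * exp (- (norm x ^ 2))"
    by (simp add: mderiv_tensor_prod real_smooth_gauss_poly funpow_deriv_gauss_poly
        tensor_prod_gauss_poly P_def)
  have "exp (norm x ^ 2) * exp (- (norm x ^ 2)) = 1"
    by (simp flip: exp_add)
  then have "hermite_fun \<gamma> x = hermite_const \<gamma> * P * exp (- (1/2 * norm x ^ 2))"
    unfolding hermite_fun_def hermite_poly_def hermite_const_def md by (simp add: field_simps)
  also have "\<dots> = tensor_prod (\<lambda>j. gauss_poly (1/2) (hermite_factor \<gamma> j)) x"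
    by (simp add: tensor_prod_gauss_poly prod_hermite_factor[of \<gamma> "\<lambda>j. x$j"] P_def)
  finally show "hermite_fun \<gamma> x = tensor_prod (\<lambda>j. gauss_poly (1/2) (hermite_factor \<gamma> j)) x" .
qed

lemma smooth_hermite_fun: "smooth (hermite_fun \<gamma>)"
  unfolding hermite_fun_eq_tensor_prod by (rule smooth_tensor_prod) (rule real_smooth_gauss_poly)

section \<open>One-dimensional estimates\<close>

definition halfpow1 :: "nat \<Rightarrow> real" where
  "halfpow1 m = sqrt (real m ^ m)"

lemma halfpow1_nonneg: "0 \<le> halfpow1 m"
  unfolding halfpow1_def by simp

lemma halfpow_eq_prod_halfpow1: "halfpow \<alpha> = (\<Prod>j\<in>UNIV. halfpow1 (\<alpha> j))"
  unfolding halfpow_def halfpow1_def ..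

lemma power_le_selfpow_mult_exp:
  assumes "(s::real) \<ge> 0"
  shows "s ^ m \<le> real m ^ m * exp s"
proof (cases "m = 0")
  case False
  then have m: "real m > 0" by simp
  have "s / m \<le> exp (s / m)"
    using exp_ge_add_one_self[of "s/m"] by linarith
  then have "(s / m) ^ m \<le> exp (s / m) ^ m"
    by (rule power_mono) (use assms m in simp)
  also have "exp (s / m) ^ m = exp s"
    using m by (simp flip: exp_of_nat_mult)
  finally show ?thesis
    using m by (simp add: power_divide field_simps)
qed (use assms in simp)

lemma abs_power_mult_gauss_le: "\<bar>t\<bar> ^ m * exp (- (1/2 * t^2)) \<le> halfpow1 m"
proof -
  have "(\<bar>t\<bar> ^ m * exp (- (1/2 * t^2)))^2 = (t^2)^m * exp (- (t^2))"
    by (simp add: power_mult_distrib power_even_abs mult.commute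
        flip: exp_of_nat_mult power_mult)
  also have "\<dots> \<le> real m ^ m"
    using power_le_selfpow_mult_exp[of "t^2" m] by (simp add: exp_minus field_simps)
  finally show ?thesis
    unfolding halfpow1_def by (rule real_le_rsqrt)
qed

lemma halfpow1_Suc_le: "halfpow1 (Suc m) \<le> 2 ^ m * halfpow1 m"
proof -
  have "(m+1)^(m+1) \<le> 4^m * m^m"
  proof (cases "m = 0")
    case False
    have "(m+1)^m \<le> (2*m)^m"
      by (rule power_mono) (use False in auto)
    moreover have "m + 1 \<le> 2^m"
      using False by (metis Suc_eq_plus1 Suc_leI less_exp)
    ultimately have "(m+1) * (m+1)^m \<le> 2^m * (2*m)^m"
      by (rule mult_le_mono[rotated])
    also have "\<dots> = 2^m * 2^m * m^m"
      by (simp add: power_mult_distrib)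
    also have "(2::nat)^m * 2^m = 4^m"
      by (simp flip: power_mult_distrib)
    finally show ?thesis by simp
  qed simp
  then have "real ((m+1)^(m+1)) \<le> real (4^m * m^m)"
    by (rule of_nat_mono)
  moreover have "((2::real)^m)^2 = 4^m"
    by (simp add: power2_eq_square flip: power_mult_distrib)
  ultimately have "real (Suc m) ^ Suc m \<le> (2^m)^2 * real m ^ m"
    by (metis Suc_eq_plus1 of_nat_mult of_nat_numeral of_nat_power)
  then have "sqrt (real (Suc m) ^ Suc m) \<le> sqrt ((2^m)^2 * real m ^ m)"
    by (rule real_sqrt_le_mono)
  then show ?thesis
    unfolding halfpow1_def by (simp add: real_sqrt_mult)
qed

lemma halfpow1_add_le: "halfpow1 (m + i) \<le> 2 ^ (i * (m + i)) * halfpow1 m"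
proof (induction i)
  case (Suc i)
  have "halfpow1 (m + Suc i) \<le> 2 ^ (m + i) * halfpow1 (m + i)"
    using halfpow1_Suc_le[of "m+i"] by simp
  also have "\<dots> \<le> 2 ^ (m + i) * (2 ^ (i * (m + i)) * halfpow1 m)"
    using Suc by (simp add: mult_left_mono)
  also have "\<dots> = 2 ^ ((i+1) * (m + i)) * halfpow1 m"
    by (simp add: power_add algebra_simps)
  also have "\<dots> \<le> 2 ^ (Suc i * (m + Suc i)) * halfpow1 m"
    by (rule mult_right_mono[OF power_increasing halfpow1_nonneg]) auto
  finally show ?case .
qed simp

lemma of_nat_mult_halfpow1_le:
  assumes "real k \<le> real m + 2"
  shows "real k * halfpow1 m \<le> halfpow1 (m + 2)"
proof -
  have "(real k)^2 * real m ^ m \<le> (real m + 2)^2 * (real m + 2) ^ m"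
    by (rule mult_mono) (use assms in \<open>auto intro!: power_mono\<close>)
  also have "\<dots> = real (m + 2) ^ (m + 2)"
    by (simp add: power_add power2_eq_square algebra_simps)
  finally have "sqrt ((real k)^2 * real m ^ m) \<le> sqrt (real (m + 2) ^ (m + 2))"
    by (rule real_sqrt_le_mono)
  then show ?thesis
    unfolding halfpow1_def by (simp add: real_sqrt_mult)
qed

text \<open>Since \<open>|t|^m exp(-t^2/2) \<le> m^(m/2)\<close>, this bounds \<open>sup\<^sub>t |t^a p(t) exp(-t^2/2)|\<close>
  coefficient by coefficient.\<close>
definition poly_moment_bound :: "real poly \<Rightarrow> nat \<Rightarrow> real" where
  "poly_moment_bound p a = (\<Sum>i\<le>degree p. \<bar>coeff p i\<bar> * halfpow1 (a + i))"

lemma poly_moment_bound_eq_sum: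
  "degree p \<le> N \<Longrightarrow> poly_moment_bound p a = (\<Sum>i\<le>N. \<bar>coeff p i\<bar> * halfpow1 (a + i))"
  unfolding poly_moment_bound_def
  by (rule sum.mono_neutral_left) (auto simp: coeff_eq_0)

lemma abs_power_mult_gauss_poly_le: "\<bar>t^a * gauss_poly (1/2) p t\<bar> \<le> poly_moment_bound p a"
proof -
  have "t^a * gauss_poly (1/2) p t = (\<Sum>i\<le>degree p. coeff p i * (t^(a+i) * exp (- (1/2 * t^2))))"
    unfolding gauss_poly_def poly_altdef
    by (simp add: sum_distrib_left sum_distrib_right power_add algebra_simps)
  also have "\<bar>\<dots>\<bar> \<le> (\<Sum>i\<le>degree p. \<bar>coeff p i\<bar> * (\<bar>t\<bar>^(a+i) * exp (- (1/2 * t^2))))"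
    by (rule order.trans[OF sum_abs]) (simp add: abs_mult power_abs)
  also have "\<dots> \<le> poly_moment_bound p a"
    unfolding poly_moment_bound_def
    by (intro sum_mono mult_left_mono abs_power_mult_gauss_le) simp
  finally show ?thesis .
qed

lemma poly_moment_bound_diff:
  "poly_moment_bound (p - q) a \<le> poly_moment_bound p a + poly_moment_bound q a"
proof -
  define N where "N = max (degree p) (degree q)"
  have "degree (p - q) \<le> N"
    unfolding N_def by (rule degree_diff_le_max)
  then have "poly_moment_bound (p - q) a = (\<Sum>i\<le>N. \<bar>coeff p i - coeff q i\<bar> * halfpow1 (a + i))"
    by (simp add: poly_moment_bound_eq_sum)
  also have "\<dots> \<le> (\<Sum>i\<le>N. \<bar>coeff p i\<bar> * halfpow1 (a + i) + \<bar>coeff q i\<bar> * halfpow1 (a + i))"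
    by (intro sum_mono) (use halfpow1_nonneg in \<open>auto simp flip: distrib_right
        intro!: mult_right_mono abs_triangle_ineq4\<close>)
  also have "\<dots> = poly_moment_bound p a + poly_moment_bound q a"
    using poly_moment_bound_eq_sum[of p N a] poly_moment_bound_eq_sum[of q N a]
    by (simp add: sum.distrib N_def)
  finally show ?thesis .
qed

lemma poly_moment_bound_smult: "poly_moment_bound (smult c p) a = \<bar>c\<bar> * poly_moment_bound p a"
  by (simp add: poly_moment_bound_eq_sum[OF degree_smult_le] poly_moment_bound_def
      abs_mult sum_distrib_left mult.assoc)

lemma poly_moment_bound_pCons_0: "poly_moment_bound (pCons 0 p) a = poly_moment_bound p (a + 1)"
proof -
  have "poly_moment_bound (pCons 0 p) a
      = (\<Sum>i\<le>Suc (degree p). \<bar>coeff (pCons 0 p) i\<bar> * halfpow1 (a + i))"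
    by (rule poly_moment_bound_eq_sum[OF degree_pCons_le])
  also have "\<dots> = (\<Sum>i\<le>degree p. \<bar>coeff p i\<bar> * halfpow1 (a + 1 + i))"
    by (subst sum.atMost_Suc_shift) simp
  finally show ?thesis
    by (simp add: poly_moment_bound_def)
qed

lemma poly_moment_bound_pderiv: "poly_moment_bound (pderiv p) a \<le> poly_moment_bound p (a + 1)"
proof -
  have "poly_moment_bound (pderiv p) a = (\<Sum>i\<le>degree p. \<bar>coeff p (Suc i)\<bar> * (real (Suc i) * halfpow1 (a + i)))"
    by (simp add: poly_moment_bound_eq_sum[of _ "degree p"] degree_pderiv coeff_pderiv abs_mult
        mult_ac del: of_nat_Suc)
  also have "\<dots> \<le> (\<Sum>i\<le>degree p. \<bar>coeff p (Suc i)\<bar> * halfpow1 (a + 1 + Suc i))"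
    by (intro sum_mono mult_left_mono) (use of_nat_mult_halfpow1_le[of "Suc i" "a + i" for i] in auto)
  also have "\<dots> \<le> \<bar>coeff p 0\<bar> * halfpow1 (a + 1 + 0) + (\<Sum>i\<le>degree p. \<bar>coeff p (Suc i)\<bar> * halfpow1 (a + 1 + Suc i))"
    using halfpow1_nonneg by simp
  also have "\<dots> = (\<Sum>i\<le>Suc (degree p). \<bar>coeff p i\<bar> * halfpow1 (a + 1 + i))"
    by (rule sum.atMost_Suc_shift[symmetric])
  also have "\<dots> = poly_moment_bound p (a + 1)"
    by (rule poly_moment_bound_eq_sum[symmetric]) simp
  finally show ?thesis .
qed

lemma poly_moment_bound_gauss_deriv_poly:
  "poly_moment_bound (gauss_deriv_poly c p) a \<le> (1 + 2 * \<bar>c\<bar>) * poly_moment_bound p (a + 1)"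
proof -
  have "poly_moment_bound (gauss_deriv_poly c p) a
      \<le> poly_moment_bound (pderiv p) a + poly_moment_bound (smult (2*c) (pCons 0 p)) a"
    unfolding gauss_deriv_poly_def by (rule poly_moment_bound_diff)
  also have "\<dots> \<le> poly_moment_bound p (a + 1) + \<bar>2*c\<bar> * poly_moment_bound p (a + 1)"
    unfolding poly_moment_bound_smult poly_moment_bound_pCons_0
    using poly_moment_bound_pderiv[of p a] by simp
  finally show ?thesis
    by (simp add: algebra_simps abs_mult)
qed

lemma poly_moment_bound_funpow_gauss_deriv_poly:
  "poly_moment_bound ((gauss_deriv_poly c ^^ b) p) a \<le> (1 + 2 * \<bar>c\<bar>) ^ b * poly_moment_bound p (a + b)"
proof (induction b arbitrary: a)
  case (Suc b)
  have "poly_moment_bound ((gauss_deriv_poly c ^^ Suc b) p) a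
      \<le> (1 + 2 * \<bar>c\<bar>) * poly_moment_bound ((gauss_deriv_poly c ^^ b) p) (a + 1)"
    unfolding funpow.simps o_apply by (rule poly_moment_bound_gauss_deriv_poly)
  also have "\<dots> \<le> (1 + 2 * \<bar>c\<bar>) * ((1 + 2 * \<bar>c\<bar>) ^ b * poly_moment_bound p (a + 1 + b))"
    by (intro mult_left_mono Suc) simp
  finally show ?case by (simp add: algebra_simps)
qed simp

lemma poly_moment_bound_le_halfpow1:
  "poly_moment_bound p m \<le> (\<Sum>i\<le>degree p. \<bar>coeff p i\<bar>) * 2 ^ (degree p * (m + degree p)) * halfpow1 m"
proof -
  have "halfpow1 (m + i) \<le> 2 ^ (degree p * (m + degree p)) * halfpow1 m" if "i \<le> degree p" for i
  proof -
    have "(2::real) ^ (i * (m + i)) \<le> 2 ^ (degree p * (m + degree p))"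
      using that by (intro power_increasing mult_le_mono) auto
    then show ?thesis
      using halfpow1_add_le[of m i] halfpow1_nonneg[of m] by (meson mult_right_mono order.trans)
  qed
  then have "poly_moment_bound p m \<le> (\<Sum>i\<le>degree p. \<bar>coeff p i\<bar> * (2 ^ (degree p * (m + degree p)) * halfpow1 m))"
    unfolding poly_moment_bound_def by (intro sum_mono mult_left_mono) auto
  then show ?thesis
    by (simp add: sum_distrib_right mult.assoc)
qed

lemma gauss_poly_deriv_moment_bound:
  "\<exists>K\<ge>0. \<exists>D\<ge>1. \<forall>a b t. \<bar>t^a * (deriv^^b) (gauss_poly (1/2) p) t\<bar> \<le> K * D^(a+b) * halfpow1 (a+b)"
proof (intro exI conjI allI)
  define n where "n = degree p"
  define L where "L = (\<Sum>i\<le>n. \<bar>coeff p i\<bar>)"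
  have L: "L \<ge> 0" unfolding L_def by (simp add: sum_nonneg)
  then show "L * 2^(n*n) \<ge> 0" by simp
  show "(2::real)^(n+1) \<ge> 1" by (rule one_le_power) simp
  fix a b t
  have "\<bar>t^a * (deriv^^b) (gauss_poly (1/2) p) t\<bar> \<le> (1 + 2 * \<bar>1/2\<bar>)^b * poly_moment_bound p (a + b)"
    unfolding funpow_deriv_gauss_poly
    by (rule order.trans[OF abs_power_mult_gauss_poly_le poly_moment_bound_funpow_gauss_deriv_poly])
  also have "\<dots> \<le> 2^b * (L * 2 ^ (n * (a + b + n)) * halfpow1 (a + b))"
    using poly_moment_bound_le_halfpow1[of p "a + b"] by (simp add: L_def n_def)
  also have "\<dots> = L * 2^(n*n) * (2^b * (2^n)^(a+b)) * halfpow1 (a + b)"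
    by (simp add: power_add power_mult algebra_simps flip: power_mult)
  also have "\<dots> \<le> L * 2^(n*n) * (2^(n+1))^(a+b) * halfpow1 (a + b)"
  proof -
    have "(2::real)^b * (2^n)^(a+b) \<le> (2^(n+1))^(a+b)"
      by (simp add: power_add power_mult_distrib power_increasing)
    then show ?thesis
      using L halfpow1_nonneg[of "a+b"] by (simp add: mult_left_mono mult_right_mono mult.assoc)
  qed
  finally show "\<bar>t^a * (deriv^^b) (gauss_poly (1/2) p) t\<bar> \<le> L * 2^(n*n) * (2^(n+1))^(a+b) * halfpow1 (a+b)" .
qed

section \<open>Gelfand--Shilov bounds for Hermite functions\<close>

lemma hermite_fun_moment_bound:
  fixes \<gamma> :: "('d::finite) mindex"
  shows "\<exists>K\<ge>0. \<exists>D\<ge>1. \<forall>\<alpha> \<beta> x.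
    \<bar>monomial \<alpha> x * mderiv \<beta> (hermite_fun \<gamma>) x\<bar> \<le> K * D ^ mabs (madd \<alpha> \<beta>) * halfpow (madd \<alpha> \<beta>)"
proof -
  have "\<forall>j. \<exists>K\<ge>0. \<exists>D\<ge>1. \<forall>a b t.
      \<bar>t^a * (deriv^^b) (gauss_poly (1/2) (hermite_factor \<gamma> j)) t\<bar> \<le> K * D^(a+b) * halfpow1 (a+b)"
    using gauss_poly_deriv_moment_bound by blast
  then obtain Kf Df where Kf: "\<And>j. Kf j \<ge> 0" and Df: "\<And>j. Df j \<ge> 1" and bound: "\<And>j a b t.
      \<bar>t^a * (deriv^^b) (gauss_poly (1/2) (hermite_factor \<gamma> j)) t\<bar> \<le> Kf j * Df j^(a+b) * halfpow1 (a+b)"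
    by metis
  define D where "D = (\<Sum>j\<in>UNIV. Df j)"
  have Df_le_D: "Df j \<le> D" for j
    unfolding D_def by (rule member_le_sum) (use Df in \<open>auto intro: order.trans[of 0 1]\<close>)
  show ?thesis
  proof (rule exI[of _ "\<Prod>j\<in>UNIV. Kf j"], intro conjI exI[of _ D] allI)
    show "(\<Prod>j\<in>UNIV. Kf j) \<ge> 0" by (simp add: Kf prod_nonneg)
    show "D \<ge> 1" using Df_le_D Df order.trans by blast
    fix \<alpha> \<beta> x
    have "\<bar>monomial \<alpha> x * mderiv \<beta> (hermite_fun \<gamma>) x\<bar>
        = (\<Prod>j\<in>UNIV. \<bar>(x$j)^(\<alpha> j) * (deriv^^\<beta> j) (gauss_poly (1/2) (hermite_factor \<gamma> j)) (x$j)\<bar>)"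
      unfolding hermite_fun_eq_tensor_prod mderiv_tensor_prod[OF real_smooth_gauss_poly]
        monomial_mult_tensor_prod abs_prod ..
    also have "\<dots> \<le> (\<Prod>j\<in>UNIV. Kf j * D^(\<alpha> j + \<beta> j) * halfpow1 (\<alpha> j + \<beta> j))"
    proof (intro prod_mono conjI)
      fix j
      show "\<bar>(x$j)^(\<alpha> j) * (deriv^^\<beta> j) (gauss_poly (1/2) (hermite_factor \<gamma> j)) (x$j)\<bar>
          \<le> Kf j * D^(\<alpha> j + \<beta> j) * halfpow1 (\<alpha> j + \<beta> j)"
        using bound[where j=j] Kf[of j] Df[of j] Df_le_D[of j] halfpow1_nonneg
        by (meson order.trans mult_right_mono mult_left_mono power_mono order.trans[OF zero_le_one])
    qed simp
    also have "\<dots> = (\<Prod>j\<in>UNIV. Kf j) * D ^ mabs (madd \<alpha> \<beta>) * halfpow (madd \<alpha> \<beta>)"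
      unfolding mabs_def madd_def halfpow_eq_prod_halfpow1 prod.distrib power_sum ..
    finally show "\<bar>monomial \<alpha> x * mderiv \<beta> (hermite_fun \<gamma>) x\<bar>
        \<le> (\<Prod>j\<in>UNIV. Kf j) * D ^ mabs (madd \<alpha> \<beta>) * halfpow (madd \<alpha> \<beta>)" .
  qed
qed

lemma GS_bounded_if_moment_bound:
  assumes moment: "\<And>\<alpha> \<beta> x. \<bar>monomial \<alpha> x * mderiv \<beta> f x\<bar> \<le> K * D ^ mabs (madd \<alpha> \<beta>) * halfpow (madd \<alpha> \<beta>)"
    and "K \<ge> 0" "D \<ge> 0"
    and halfpow_le: "\<And>\<alpha>. halfpow \<alpha> \<le> C1 * C ^ mabs \<alpha> * N \<alpha>"
  shows "GS_bounded f N (D * C)"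
  unfolding GS_bounded_def
proof (intro exI allI)
  fix \<alpha> \<beta> x
  have "\<bar>monomial \<alpha> x * mderiv \<beta> f x\<bar> \<le> K * D ^ mabs (madd \<alpha> \<beta>) * halfpow (madd \<alpha> \<beta>)"
    by (rule moment)
  also have "\<dots> \<le> K * D ^ mabs (madd \<alpha> \<beta>) * (C1 * C ^ mabs (madd \<alpha> \<beta>) * N (madd \<alpha> \<beta>))"
    by (rule mult_left_mono[OF halfpow_le]) (use assms(2,3) in simp)
  finally show "\<bar>monomial \<alpha> x * mderiv \<beta> f x\<bar> \<le> (K * C1) * (D * C) ^ mabs (madd \<alpha> \<beta>) * N (madd \<alpha> \<beta>)"
    by (simp add: power_mult_distrib algebra_simps)
qed

lemma hermite_fun_zero:
  "hermite_fun (\<lambda>_. 0) x = exp (- (norm (x::real^'d::finite) ^ 2) / 2) / sqrt (pi powr (real CARD('d) / 2))"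
proof -
  have "exp (norm x ^ 2) * exp (- (norm x ^ 2)) = 1"
    by (simp flip: exp_add)
  then show ?thesis
    unfolding hermite_fun_def hermite_poly_def mderiv_zero by (simp add: mabs_def mfact_def field_simps)
qed

text \<open>Evaluating \<open>x^\<alpha> H\<^sub>0(x)\<close> at \<open>x\<^sub>j = sqrt \<alpha>\<^sub>j\<close> gives
  \<open>\<alpha>^(\<alpha>/2) exp(-|\<alpha>|/2)\<close> up to a constant factor.\<close>
lemma halfpow_bound_if_GS_bounded_hermite_zero:
  fixes N :: "('d::finite) mindex \<Rightarrow> real"
  assumes "GS_bounded (hermite_fun (\<lambda>_. 0)) N h" and "h > 0" and N: "\<And>\<alpha>. N \<alpha> > 0"
  shows "\<exists>C1>0. \<forall>\<alpha>. halfpow \<alpha> \<le> C1 * (exp (1/2) * h) ^ mabs \<alpha> * N \<alpha>"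
proof -
  obtain K where K: "\<And>\<alpha> \<beta> x. \<bar>monomial \<alpha> x * mderiv \<beta> (hermite_fun (\<lambda>_. 0)) (x::real^'d)\<bar>
      \<le> K * h ^ mabs (madd \<alpha> \<beta>) * N (madd \<alpha> \<beta>)"
    using assms(1) unfolding GS_bounded_def by blast
  define c where "c = sqrt (pi powr (real CARD('d) / 2))"
  have c: "c > 0" unfolding c_def by simp
  show ?thesis
  proof (intro exI conjI allI)
    show "max K 1 * c > 0" using c by simp
    fix \<alpha> :: "'d mindex"
    define x :: "real^'d" where "x = (\<chi> j. sqrt (real (\<alpha> j)))"
    have "monomial \<alpha> x = halfpow \<alpha>"
      unfolding monomial_def halfpow_def x_def by (simp add: real_sqrt_power)
    moreover have "norm x ^ 2 = real (mabs \<alpha>)"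
      unfolding power2_norm_vec x_def mabs_def by simp
    ultimately have "halfpow \<alpha> * (exp (- real (mabs \<alpha>) / 2) / c) \<le> K * h ^ mabs \<alpha> * N \<alpha>"
      using K[of \<alpha> x "\<lambda>_. 0"] c
      by (simp add: mderiv_zero hermite_fun_zero c_def[symmetric] madd_def abs_mult halfpow_def prod_nonneg)
    also have "\<dots> \<le> max K 1 * h ^ mabs \<alpha> * N \<alpha>"
      using N[of \<alpha>] \<open>h > 0\<close> by (intro mult_right_mono) auto
    finally have "halfpow \<alpha> \<le> max K 1 * c * (exp (real (mabs \<alpha>) / 2) * h ^ mabs \<alpha>) * N \<alpha>"
      using c by (simp add: exp_minus field_simps)
    also have "exp (real (mabs \<alpha>) / 2) = exp (1/2) ^ mabs \<alpha>"
      by (simp flip: exp_of_nat_mult)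
    finally show "halfpow \<alpha> \<le> max K 1 * c * (exp (1/2) * h) ^ mabs \<alpha> * N \<alpha>"
      by (simp add: power_mult_distrib)
  qed
qed

lemma weight_matrix_pos: "weight_matrix M \<Longrightarrow> lam > 0 \<Longrightarrow> M lam \<alpha> > 0"
  unfolding weight_matrix_def by blast

lemma weight_matrix_zero: "weight_matrix M \<Longrightarrow> lam > 0 \<Longrightarrow> M lam (\<lambda>_. 0) = 1"
  unfolding weight_matrix_def by blast

lemma weight_matrix_mono: "weight_matrix M \<Longrightarrow> 0 < lam \<Longrightarrow> lam \<le> kap \<Longrightarrow> M lam \<alpha> \<le> M kap \<alpha>"
  unfolding weight_matrix_def by blast

lemma halfpow_mult_le_if_product_bound:
  assumes halfpow_le: "\<And>\<alpha>. halfpow \<alpha> \<le> C1 * C ^ mabs \<alpha> * N \<alpha>" and "C1 > 0" "C > 0"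
    and L: "\<And>\<beta>. 0 \<le> L \<beta>" "\<And>\<beta>. L \<beta> \<le> N \<beta>"
    and product: "\<And>\<alpha> \<beta>. N \<alpha> * N \<beta> \<le> A ^ mabs (madd \<alpha> \<beta>) * N' (madd \<alpha> \<beta>)"
  shows "halfpow \<alpha> * L \<beta> \<le> C1 * C ^ mabs \<alpha> * A ^ mabs (madd \<alpha> \<beta>) * N' (madd \<alpha> \<beta>)"
proof -
  have "0 \<le> halfpow \<alpha>"
    unfolding halfpow_def by (simp add: prod_nonneg)
  then have "halfpow \<alpha> * L \<beta> \<le> (C1 * C ^ mabs \<alpha> * N \<alpha>) * N \<beta>"
    using halfpow_le[of \<alpha>] L[of \<beta>] by (intro mult_mono) (auto intro: order.trans)
  also have "\<dots> = (C1 * C ^ mabs \<alpha>) * (N \<alpha> * N \<beta>)"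
    by (simp add: mult.assoc)
  also have "\<dots> \<le> (C1 * C ^ mabs \<alpha>) * (A ^ mabs (madd \<alpha> \<beta>) * N' (madd \<alpha> \<beta>))"
    using product assms(2,3) by (intro mult_left_mono) auto
  finally show ?thesis by (simp add: mult.assoc)
qed

lemma halfpow_bound_if_mixed_bound:
  assumes "\<And>\<alpha> \<beta>. halfpow \<alpha> * N \<beta> \<le> B * C ^ mabs \<alpha> * H ^ mabs (madd \<alpha> \<beta>) * N' (madd \<alpha> \<beta>)"
    and "N (\<lambda>_. 0) = 1"
  shows "halfpow \<alpha> \<le> B * (C * H) ^ mabs \<alpha> * N' \<alpha>"
  using assms(1)[of \<alpha> "\<lambda>_. 0"] assms(2) by (simp add: madd_def power_mult_distrib mult.assoc)

lemma Roumieu_mixed_bound_if_halfpow_bound: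
  fixes M :: "real \<Rightarrow> ('d::finite) mindex \<Rightarrow> real"
  assumes wm: "weight_matrix M"
    and product: "\<forall>lam>0. \<exists>kap\<ge>lam. \<exists>A\<ge>1. \<forall>\<alpha> \<beta>.
      M lam \<alpha> * M lam \<beta> \<le> A ^ mabs (madd \<alpha> \<beta>) * M kap (madd \<alpha> \<beta>)"
    and halfpow_le: "\<exists>lam>0. \<exists>C>0. \<exists>C1>0. \<forall>\<alpha>. halfpow \<alpha> \<le> C1 * C ^ mabs \<alpha> * M lam \<alpha>"
  shows "\<forall>lam>0. \<exists>kap\<ge>lam. \<exists>B>0. \<exists>C>0. \<exists>H>0. \<forall>\<alpha> \<beta>.
    halfpow \<alpha> * M lam \<beta> \<le> B * C ^ mabs \<alpha> * H ^ mabs (madd \<alpha> \<beta>) * M kap (madd \<alpha> \<beta>)"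
proof (intro allI impI)
  fix lam :: real
  assume "lam > 0"
  obtain l0 C C1 where "l0 > 0" "C > 0" "C1 > 0" and l0: "\<And>\<alpha>. halfpow \<alpha> \<le> C1 * C ^ mabs \<alpha> * M l0 \<alpha>"
    using halfpow_le by blast
  define mu where "mu = max lam l0"
  have "mu > 0" "lam \<le> mu" "l0 \<le> mu"
    using \<open>lam > 0\<close> unfolding mu_def by auto
  obtain kap A where "kap \<ge> mu" "A \<ge> 1"
    and product_mu: "\<And>\<alpha> \<beta>. M mu \<alpha> * M mu \<beta> \<le> A ^ mabs (madd \<alpha> \<beta>) * M kap (madd \<alpha> \<beta>)"
    using product \<open>mu > 0\<close> by blast
  have mu: "halfpow \<alpha> \<le> C1 * C ^ mabs \<alpha> * M mu \<alpha>" for \<alpha>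
    using \<open>C > 0\<close> \<open>C1 > 0\<close>
    by (intro order.trans[OF l0] mult_left_mono weight_matrix_mono[OF wm \<open>l0 > 0\<close> \<open>l0 \<le> mu\<close>]) simp
  have lam: "0 \<le> M lam \<beta>" "M lam \<beta> \<le> M mu \<beta>" for \<beta>
    using weight_matrix_pos[OF wm \<open>lam > 0\<close>] weight_matrix_mono[OF wm \<open>lam > 0\<close> \<open>lam \<le> mu\<close>]
    by (auto simp: less_imp_le)
  have "halfpow \<alpha> * M lam \<beta> \<le> C1 * C ^ mabs \<alpha> * A ^ mabs (madd \<alpha> \<beta>) * M kap (madd \<alpha> \<beta>)" for \<alpha> \<beta>
    by (rule halfpow_mult_le_if_product_bound[OF mu \<open>C1 > 0\<close> \<open>C > 0\<close> lam product_mu])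
  moreover have "kap \<ge> lam" "A > 0"
    using \<open>kap \<ge> mu\<close> \<open>lam \<le> mu\<close> \<open>A \<ge> 1\<close> by auto
  ultimately show "\<exists>kap\<ge>lam. \<exists>B>0. \<exists>C>0. \<exists>H>0. \<forall>\<alpha> \<beta>.
      halfpow \<alpha> * M lam \<beta> \<le> B * C ^ mabs \<alpha> * H ^ mabs (madd \<alpha> \<beta>) * M kap (madd \<alpha> \<beta>)"
    using \<open>C > 0\<close> \<open>C1 > 0\<close> by blast
qed

lemma Roumieu_halfpow_bound_if_mixed_bound:
  fixes M :: "real \<Rightarrow> ('d::finite) mindex \<Rightarrow> real"
  assumes wm: "weight_matrix M"
    and mixed: "\<forall>lam>0. \<exists>kap\<ge>lam. \<exists>B>0. \<exists>C>0. \<exists>H>0. \<forall>\<alpha> \<beta>.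
      halfpow \<alpha> * M lam \<beta> \<le> B * C ^ mabs \<alpha> * H ^ mabs (madd \<alpha> \<beta>) * M kap (madd \<alpha> \<beta>)"
  shows "\<exists>lam>0. \<exists>C>0. \<exists>C1>0. \<forall>\<alpha>. halfpow \<alpha> \<le> C1 * C ^ mabs \<alpha> * M lam \<alpha>"
proof -
  obtain kap B C H where "kap \<ge> 1" "B > 0" "C > 0" "H > 0"
    and mixed1: "\<And>\<alpha> \<beta>. halfpow \<alpha> * M 1 \<beta> \<le> B * C ^ mabs \<alpha> * H ^ mabs (madd \<alpha> \<beta>) * M kap (madd \<alpha> \<beta>)"
    using mixed[rule_format, of 1] by auto
  have "halfpow \<alpha> \<le> B * (C * H) ^ mabs \<alpha> * M kap \<alpha>" for \<alpha>
    by (rule halfpow_bound_if_mixed_bound[OF mixed1 weight_matrix_zero[OF wm]]) simp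
  moreover have "kap > 0" "C * H > 0"
    using \<open>kap \<ge> 1\<close> \<open>C > 0\<close> \<open>H > 0\<close> by auto
  ultimately show ?thesis
    using \<open>B > 0\<close> by blast
qed

lemma hermite_fun_in_S_Roumieu_if_halfpow_bound:
  fixes M :: "real \<Rightarrow> ('d::finite) mindex \<Rightarrow> real"
  assumes "\<exists>lam>0. \<exists>C>0. \<exists>C1>0. \<forall>\<alpha>. halfpow \<alpha> \<le> C1 * C ^ mabs \<alpha> * M lam \<alpha>"
  shows "hermite_fun \<gamma> \<in> S_Roumieu M"
proof -
  obtain lam C C1 where "lam > 0" "C > 0" and halfpow_le: "\<And>\<alpha>. halfpow \<alpha> \<le> C1 * C ^ mabs \<alpha> * M lam \<alpha>"
    using assms by blast
  obtain K D where "K \<ge> 0" "D \<ge> 1" and "\<And>\<alpha> \<beta> x. \<bar>monomial \<alpha> x * mderiv \<beta> (hermite_fun \<gamma>) x\<bar>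
      \<le> K * D ^ mabs (madd \<alpha> \<beta>) * halfpow (madd \<alpha> \<beta>)"
    using hermite_fun_moment_bound[of \<gamma>] by blast
  then have "GS_bounded (hermite_fun \<gamma>) (M lam) (D * C)"
    using halfpow_le by (intro GS_bounded_if_moment_bound) auto
  moreover have "D * C > 0"
    using \<open>C > 0\<close> \<open>D \<ge> 1\<close> by simp
  ultimately show ?thesis
    unfolding S_Roumieu_def using smooth_hermite_fun \<open>lam > 0\<close> by blast
qed

lemma Roumieu_halfpow_bound_if_hermite_fun_in_S:
  fixes M :: "real \<Rightarrow> ('d::finite) mindex \<Rightarrow> real"
  assumes wm: "weight_matrix M" and "hermite_fun (\<lambda>_. 0) \<in> S_Roumieu M"
  shows "\<exists>lam>0. \<exists>C>0. \<exists>C1>0. \<forall>\<alpha>. halfpow \<alpha> \<le> C1 * C ^ mabs \<alpha> * M lam \<alpha>"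
proof -
  obtain lam h where "lam > 0" "h > 0" and "GS_bounded (hermite_fun (\<lambda>_. 0)) (M lam) h"
    using assms(2) unfolding S_Roumieu_def by blast
  then show ?thesis
    using halfpow_bound_if_GS_bounded_hermite_zero weight_matrix_pos[OF wm]
    by (metis exp_gt_zero mult_pos_pos)
qed

lemma Beurling_mixed_bound_if_halfpow_bound:
  fixes M :: "real \<Rightarrow> ('d::finite) mindex \<Rightarrow> real"
  assumes wm: "weight_matrix M"
    and product: "\<forall>lam>0. \<exists>kap>0. kap \<le> lam \<and> (\<exists>A\<ge>1. \<forall>\<alpha> \<beta>.
      M kap \<alpha> * M kap \<beta> \<le> A ^ mabs (madd \<alpha> \<beta>) * M lam (madd \<alpha> \<beta>))"
    and halfpow_le: "\<forall>lam>0. \<forall>C>0. \<exists>C1>0. \<forall>\<alpha>. halfpow \<alpha> \<le> C1 * C ^ mabs \<alpha> * M lam \<alpha>"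
  shows "\<forall>lam>0. \<exists>kap>0. kap \<le> lam \<and> (\<exists>H>0. \<forall>C>0. \<exists>B>0. \<forall>\<alpha> \<beta>.
    halfpow \<alpha> * M kap \<beta> \<le> B * C ^ mabs \<alpha> * H ^ mabs (madd \<alpha> \<beta>) * M lam (madd \<alpha> \<beta>))"
proof (intro allI impI)
  fix lam :: real
  assume "lam > 0"
  obtain kap A where "kap > 0" "kap \<le> lam" "A \<ge> 1"
    and kap: "\<And>\<alpha> \<beta>. M kap \<alpha> * M kap \<beta> \<le> A ^ mabs (madd \<alpha> \<beta>) * M lam (madd \<alpha> \<beta>)"
    using product \<open>lam > 0\<close> by blast
  have "\<exists>B>0. \<forall>\<alpha> \<beta>. halfpow \<alpha> * M kap \<beta> \<le> B * C ^ mabs \<alpha> * A ^ mabs (madd \<alpha> \<beta>) * M lam (madd \<alpha> \<beta>)"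
    if "C > 0" for C
  proof -
    obtain C1 where "C1 > 0" and C1: "\<And>\<alpha>. halfpow \<alpha> \<le> C1 * C ^ mabs \<alpha> * M kap \<alpha>"
      using halfpow_le \<open>kap > 0\<close> \<open>C > 0\<close> by blast
    have "0 \<le> M kap \<beta>" for \<beta>
      using weight_matrix_pos[OF wm \<open>kap > 0\<close>] by (simp add: less_imp_le)
    then have "halfpow \<alpha> * M kap \<beta> \<le> C1 * C ^ mabs \<alpha> * A ^ mabs (madd \<alpha> \<beta>) * M lam (madd \<alpha> \<beta>)"
      for \<alpha> \<beta>
      by (rule halfpow_mult_le_if_product_bound[OF C1 \<open>C1 > 0\<close> \<open>C > 0\<close> _ order.refl kap])
    with \<open>C1 > 0\<close> show ?thesis by blast
  qed
  moreover have "A > 0"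
    using \<open>A \<ge> 1\<close> by simp
  ultimately show "\<exists>kap>0. kap \<le> lam \<and> (\<exists>H>0. \<forall>C>0. \<exists>B>0. \<forall>\<alpha> \<beta>.
      halfpow \<alpha> * M kap \<beta> \<le> B * C ^ mabs \<alpha> * H ^ mabs (madd \<alpha> \<beta>) * M lam (madd \<alpha> \<beta>))"
    using \<open>kap > 0\<close> \<open>kap \<le> lam\<close> by blast
qed

lemma Beurling_halfpow_bound_if_mixed_bound:
  fixes M :: "real \<Rightarrow> ('d::finite) mindex \<Rightarrow> real"
  assumes wm: "weight_matrix M"
    and mixed: "\<forall>lam>0. \<exists>kap>0. kap \<le> lam \<and> (\<exists>H>0. \<forall>C>0. \<exists>B>0. \<forall>\<alpha> \<beta>.
      halfpow \<alpha> * M kap \<beta> \<le> B * C ^ mabs \<alpha> * H ^ mabs (madd \<alpha> \<beta>) * M lam (madd \<alpha> \<beta>))"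
  shows "\<forall>lam>0. \<forall>C>0. \<exists>C1>0. \<forall>\<alpha>. halfpow \<alpha> \<le> C1 * C ^ mabs \<alpha> * M lam \<alpha>"
proof (intro allI impI)
  fix lam C :: real
  assume "lam > 0" "C > 0"
  obtain kap H where "kap > 0" "H > 0" and kap: "\<forall>C>0. \<exists>B>0. \<forall>\<alpha> \<beta>.
      halfpow \<alpha> * M kap \<beta> \<le> B * C ^ mabs \<alpha> * H ^ mabs (madd \<alpha> \<beta>) * M lam (madd \<alpha> \<beta>)"
    using mixed[rule_format, OF \<open>lam > 0\<close>] by (elim exE conjE) (rule that)
  obtain B where "B > 0" and "\<And>\<alpha> \<beta>.
      halfpow \<alpha> * M kap \<beta> \<le> B * (C / H) ^ mabs \<alpha> * H ^ mabs (madd \<alpha> \<beta>) * M lam (madd \<alpha> \<beta>)"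
    using kap \<open>C > 0\<close> \<open>H > 0\<close> by (meson divide_pos_pos)
  then have "halfpow \<alpha> \<le> B * (C / H * H) ^ mabs \<alpha> * M lam \<alpha>" for \<alpha>
    using weight_matrix_zero[OF wm \<open>kap > 0\<close>] by (intro halfpow_bound_if_mixed_bound)
  with \<open>B > 0\<close> \<open>H > 0\<close> show "\<exists>C1>0. \<forall>\<alpha>. halfpow \<alpha> \<le> C1 * C ^ mabs \<alpha> * M lam \<alpha>"
    by auto
qed

lemma hermite_fun_in_S_Beurling_if_halfpow_bound:
  fixes M :: "real \<Rightarrow> ('d::finite) mindex \<Rightarrow> real"
  assumes halfpow_le: "\<forall>lam>0. \<forall>C>0. \<exists>C1>0. \<forall>\<alpha>. halfpow \<alpha> \<le> C1 * C ^ mabs \<alpha> * M lam \<alpha>"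
  shows "hermite_fun \<gamma> \<in> S_Beurling M"
proof -
  obtain K D where "K \<ge> 0" "D \<ge> 1" and moment: "\<And>\<alpha> \<beta> x. \<bar>monomial \<alpha> x * mderiv \<beta> (hermite_fun \<gamma>) x\<bar>
      \<le> K * D ^ mabs (madd \<alpha> \<beta>) * halfpow (madd \<alpha> \<beta>)"
    using hermite_fun_moment_bound[of \<gamma>] by blast
  have "GS_bounded (hermite_fun \<gamma>) (M lam) h" if "lam > 0" "h > 0" for lam h
  proof -
    obtain C1 where "\<And>\<alpha>. halfpow \<alpha> \<le> C1 * (h / D) ^ mabs \<alpha> * M lam \<alpha>"
      using halfpow_le \<open>lam > 0\<close> \<open>h > 0\<close> \<open>D \<ge> 1\<close> by (meson divide_pos_pos less_le_trans zero_less_one)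
    then have "GS_bounded (hermite_fun \<gamma>) (M lam) (D * (h / D))"
      using moment \<open>K \<ge> 0\<close> \<open>D \<ge> 1\<close> by (intro GS_bounded_if_moment_bound) auto
    with \<open>D \<ge> 1\<close> show ?thesis by simp
  qed
  then show ?thesis
    unfolding S_Beurling_def using smooth_hermite_fun by blast
qed

lemma Beurling_halfpow_bound_if_hermite_fun_in_S:
  fixes M :: "real \<Rightarrow> ('d::finite) mindex \<Rightarrow> real"
  assumes wm: "weight_matrix M" and "hermite_fun (\<lambda>_. 0) \<in> S_Beurling M"
  shows "\<forall>lam>0. \<forall>C>0. \<exists>C1>0. \<forall>\<alpha>. halfpow \<alpha> \<le> C1 * C ^ mabs \<alpha> * M lam \<alpha>"
proof (intro allI impI)
  fix lam C :: real
  assume "lam > 0" "C > 0"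
  then have "GS_bounded (hermite_fun (\<lambda>_. 0)) (M lam) (C / exp (1/2))"
    using assms(2) unfolding S_Beurling_def by simp
  then show "\<exists>C1>0. \<forall>\<alpha>. halfpow \<alpha> \<le> C1 * C ^ mabs \<alpha> * M lam \<alpha>"
    using halfpow_bound_if_GS_bounded_hermite_zero[of "M lam" "C / exp (1/2)"]
      weight_matrix_pos[OF wm \<open>lam > 0\<close>] \<open>C > 0\<close>
    by simp
qed

lemma Roumieu_characterization:
  fixes M :: "real \<Rightarrow> ('d::finite) mindex \<Rightarrow> real"
  assumes wm: "weight_matrix M"
    and product: "\<forall>lam>0. \<exists>kap\<ge>lam. \<exists>A\<ge>1. \<forall>\<alpha> \<beta>.
      M lam \<alpha> * M lam \<beta> \<le> A ^ mabs (madd \<alpha> \<beta>) * M kap (madd \<alpha> \<beta>)"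
  shows "((\<exists>lam>0. \<exists>C>0. \<exists>C1>0. \<forall>\<alpha>. halfpow \<alpha> \<le> C1 * C ^ mabs \<alpha> * M lam \<alpha>)
       \<longleftrightarrow>
       (\<forall>lam>0. \<exists>kap\<ge>lam. \<exists>B>0. \<exists>C>0. \<exists>H>0. \<forall>\<alpha> \<beta>.
          halfpow \<alpha> * M lam \<beta> \<le> B * C ^ mabs \<alpha> * H ^ mabs (madd \<alpha> \<beta>) * M kap (madd \<alpha> \<beta>)))
      \<and>
      ((\<forall>lam>0. \<exists>kap\<ge>lam. \<exists>B>0. \<exists>C>0. \<exists>H>0. \<forall>\<alpha> \<beta>.
          halfpow \<alpha> * M lam \<beta> \<le> B * C ^ mabs \<alpha> * H ^ mabs (madd \<alpha> \<beta>) * M kap (madd \<alpha> \<beta>))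
       \<longleftrightarrow>
       (\<forall>\<gamma>. hermite_fun \<gamma> \<in> S_Roumieu M))"
    (is "(?a \<longleftrightarrow> ?b) \<and> (?b \<longleftrightarrow> ?c)")
proof (intro conjI iffI)
  assume ?a
  then show ?b by (rule Roumieu_mixed_bound_if_halfpow_bound[OF wm product])
next
  assume ?b
  then show ?a by (rule Roumieu_halfpow_bound_if_mixed_bound[OF wm])
next
  assume ?b
  then have ?a by (rule Roumieu_halfpow_bound_if_mixed_bound[OF wm])
  then show ?c using hermite_fun_in_S_Roumieu_if_halfpow_bound by blast
next
  assume ?c
  have ?a by (rule Roumieu_halfpow_bound_if_hermite_fun_in_S[OF wm]) (use \<open>?c\<close> in simp)
  then show ?b by (rule Roumieu_mixed_bound_if_halfpow_bound[OF wm product])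
qed

lemma Beurling_characterization:
  fixes M :: "real \<Rightarrow> ('d::finite) mindex \<Rightarrow> real"
  assumes wm: "weight_matrix M"
    and product: "\<forall>lam>0. \<exists>kap>0. kap \<le> lam \<and> (\<exists>A\<ge>1. \<forall>\<alpha> \<beta>.
      M kap \<alpha> * M kap \<beta> \<le> A ^ mabs (madd \<alpha> \<beta>) * M lam (madd \<alpha> \<beta>))"
  shows "((\<forall>lam>0. \<forall>C>0. \<exists>C1>0. \<forall>\<alpha>. halfpow \<alpha> \<le> C1 * C ^ mabs \<alpha> * M lam \<alpha>)
       \<longleftrightarrow>
       (\<forall>lam>0. \<exists>kap>0. kap \<le> lam \<and> (\<exists>H>0. \<forall>C>0. \<exists>B>0. \<forall>\<alpha> \<beta>.
          halfpow \<alpha> * M kap \<beta> \<le> B * C ^ mabs \<alpha> * H ^ mabs (madd \<alpha> \<beta>) * M lam (madd \<alpha> \<beta>))))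
      \<and>
      ((\<forall>lam>0. \<exists>kap>0. kap \<le> lam \<and> (\<exists>H>0. \<forall>C>0. \<exists>B>0. \<forall>\<alpha> \<beta>.
          halfpow \<alpha> * M kap \<beta> \<le> B * C ^ mabs \<alpha> * H ^ mabs (madd \<alpha> \<beta>) * M lam (madd \<alpha> \<beta>)))
       \<longleftrightarrow>
       (\<forall>\<gamma>. hermite_fun \<gamma> \<in> S_Beurling M))"
    (is "(?a \<longleftrightarrow> ?b) \<and> (?b \<longleftrightarrow> ?c)")
proof (intro conjI iffI)
  assume ?a
  then show ?b by (rule Beurling_mixed_bound_if_halfpow_bound[OF wm product])
next
  assume ?b
  then show ?a by (rule Beurling_halfpow_bound_if_mixed_bound[OF wm])
next
  assume ?b
  then have ?a by (rule Beurling_halfpow_bound_if_mixed_bound[OF wm])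
  then show ?c using hermite_fun_in_S_Beurling_if_halfpow_bound by blast
next
  assume ?c
  have ?a by (rule Beurling_halfpow_bound_if_hermite_fun_in_S[OF wm]) (use \<open>?c\<close> in simp)
  then show ?b by (rule Beurling_mixed_bound_if_halfpow_bound[OF wm product])
qed

theorem proposition4p7:
  fixes M :: "real \<Rightarrow> ('d::finite) mindex \<Rightarrow> real"
  assumes wm: "weight_matrix M"
  shows
   "((\<forall>lam>0. \<exists>kap\<ge>lam. \<exists>A\<ge>1. \<forall>\<alpha> j.
        M lam (madd \<alpha> (unitidx j)) \<le> A ^ (mabs \<alpha> + 1) * M kap \<alpha>) \<and>
     (\<forall>lam>0. \<exists>kap\<ge>lam. \<exists>A\<ge>1. \<forall>\<alpha> \<beta>.
        M lam \<alpha> * M lam \<beta> \<le> A ^ mabs (madd \<alpha> \<beta>) * M kap (madd \<alpha> \<beta>))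
    \<longrightarrow>
     (((\<exists>lam>0. \<exists>C>0. \<exists>C1>0. \<forall>\<alpha>. halfpow \<alpha> \<le> C1 * C ^ mabs \<alpha> * M lam \<alpha>)
       \<longleftrightarrow>
       (\<forall>lam>0. \<exists>kap\<ge>lam. \<exists>B>0. \<exists>C>0. \<exists>H>0. \<forall>\<alpha> \<beta>.
          halfpow \<alpha> * M lam \<beta> \<le> B * C ^ mabs \<alpha> * H ^ mabs (madd \<alpha> \<beta>) * M kap (madd \<alpha> \<beta>)))
      \<and>
      ((\<forall>lam>0. \<exists>kap\<ge>lam. \<exists>B>0. \<exists>C>0. \<exists>H>0. \<forall>\<alpha> \<beta>.
          halfpow \<alpha> * M lam \<beta> \<le> B * C ^ mabs \<alpha> * H ^ mabs (madd \<alpha> \<beta>) * M kap (madd \<alpha> \<beta>))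
       \<longleftrightarrow>
       (\<forall>\<gamma>. hermite_fun \<gamma> \<in> S_Roumieu M))))
   \<and>
   ((\<forall>lam>0. \<exists>kap>0. kap \<le> lam \<and> (\<exists>A\<ge>1. \<forall>\<alpha> j.
        M kap (madd \<alpha> (unitidx j)) \<le> A ^ (mabs \<alpha> + 1) * M lam \<alpha>)) \<and>
     (\<forall>lam>0. \<exists>kap>0. kap \<le> lam \<and> (\<exists>A\<ge>1. \<forall>\<alpha> \<beta>.
        M kap \<alpha> * M kap \<beta> \<le> A ^ mabs (madd \<alpha> \<beta>) * M lam (madd \<alpha> \<beta>)))
    \<longrightarrow>
     (((\<forall>lam>0. \<forall>C>0. \<exists>C1>0. \<forall>\<alpha>. halfpow \<alpha> \<le> C1 * C ^ mabs \<alpha> * M lam \<alpha>)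
       \<longleftrightarrow>
       (\<forall>lam>0. \<exists>kap>0. kap \<le> lam \<and> (\<exists>H>0. \<forall>C>0. \<exists>B>0. \<forall>\<alpha> \<beta>.
          halfpow \<alpha> * M kap \<beta> \<le> B * C ^ mabs \<alpha> * H ^ mabs (madd \<alpha> \<beta>) * M lam (madd \<alpha> \<beta>))))
      \<and>
      ((\<forall>lam>0. \<exists>kap>0. kap \<le> lam \<and> (\<exists>H>0. \<forall>C>0. \<exists>B>0. \<forall>\<alpha> \<beta>.
          halfpow \<alpha> * M kap \<beta> \<le> B * C ^ mabs \<alpha> * H ^ mabs (madd \<alpha> \<beta>) * M lam (madd \<alpha> \<beta>)))
       \<longleftrightarrow>
       (\<forall>\<gamma>. hermite_fun \<gamma> \<in> S_Beurling M))))"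
  by (rule conjI; rule impI; elim conjE;
      rule Roumieu_characterization[OF wm] Beurling_characterization[OF wm]; assumption)

end
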